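(* Under the degree-corrected stochastic block model $DCSBM(n,P,\Theta,Z)$, the matrix $X^*$ has exactly $K$ distinct rows, and for any nodes $i\ne j$ with $g_i=g_j$, the $i$-th row of $X^*$ equals the $j$-th row of $X^*$.
   Context: $n$ nodes, each in exactly one of $K$ communities, $g_i$ the community of node $i$, every community nonempty; $Z\in\{0,1\}^{n\times K}$ with $Z_{ik}=1$ iff $g_i=k$. $P$ is a $K\times K$ symmetric, nonnegative, nonsingular, irreducible matrix; $\theta\in\mathbb{R}^n$ has positive entries and $\Theta=\mathrm{diag}(\theta)$. Let $\Omega=\Theta ZPZ'\Theta$, which has rank $K$. Let $\lambda_1,\dots,\lambda_K$ be the nonzero eigenvalues of $\Omega$ in descending order of magnitude, $E_\Omega=\mathrm{diag}(\lambda_1,\dots,\lambda_K)$, and $V_\Omega$ the $n\times K$ matrix whose $k$-th column is a unit-norm eigenvector of $\Omega$ for $\lambda_k$. Set $X=V_\Omega E_\Omega$; $X^*$ is obtained by dividing each row of $X$ by its Euclidean norm. *)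

theory Defs
  imports "HOL-Analysis.Analysis"
begin

definition diag_mat :: "real ^ 'n \<Rightarrow> real ^ 'n ^ 'n" where
  "diag_mat d = (\<chi> i j. if i = j then d $ i else 0)"

primrec matpow :: "real ^ 'n ^ 'n \<Rightarrow> nat \<Rightarrow> real ^ 'n ^ 'n" where
  "matpow A 0 = mat 1"
| "matpow A (Suc m) = A ** matpow A m"

definition irreducible_mat :: "real ^ 'n ^ 'n \<Rightarrow> bool" where
  "irreducible_mat A \<longleftrightarrow> (\<forall>i j. \<exists>m. matpow A m $ i $ j > 0)"

definition membership_mat :: "('n \<Rightarrow> 'k) \<Rightarrow> real ^ 'k ^ 'n" where
  "membership_mat g = (\<chi> i k. if g i = k then 1 else 0)"

definition row_normalize :: "real ^ 'k ^ 'n \<Rightarrow> real ^ 'k ^ 'n" where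
  "row_normalize X = (\<chi> i. (1 / norm (X $ i)) *\<^sub>R (X $ i))"

end

theory Submission
  imports Defs
begin

text \<open>Since \<open>\<Omega> V = V \<Lambda>\<close>, the matrix \<open>X = V \<Lambda> = \<Theta> Z B\<close> with \<open>B = P Z' \<Theta> V\<close> has
  \<open>i\<close>-th row \<open>\<theta>\<^sub>i\<close> times row \<open>g\<^sub>i\<close> of \<open>B\<close>. As \<open>\<theta>\<^sub>i > 0\<close>, row \<open>i\<close> of \<open>X\<^sup>*\<close> is the
  normalised row \<open>g\<^sub>i\<close> of \<open>B\<close>, which depends only on the community of \<open>i\<close>.
  Orthonormality of \<open>V\<close> gives \<open>(V' \<Theta> Z) B = \<Lambda>\<close>, so \<open>B\<close> is invertible; its rows are
  therefore pairwise linearly independent and their normalisations are \<open>K\<close> distinct vectors.\<close>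

lemma matrix_mul_diag_mat_nth: "(A ** diag_mat d) $ i $ k = A $ i $ k * d $ k"
  by (simp add: matrix_matrix_mult_def diag_mat_def if_distrib cong: if_cong)

lemma diag_mat_mul_row: "(diag_mat d ** A) $ i = d $ i *\<^sub>R A $ i"
  by (simp add: vec_eq_iff matrix_matrix_mult_def diag_mat_def
      if_distrib[of "\<lambda>x. x * _"] cong: if_cong)

lemma membership_mat_mul_row: "(membership_mat g ** B) $ i = B $ g i"
  by (simp add: vec_eq_iff matrix_matrix_mult_def membership_mat_def
      if_distrib[of "\<lambda>x. x * _"] cong: if_cong)

lemma det_diag_mat: "det (diag_mat d) = (\<Prod>k\<in>UNIV. d $ k)"
  by (simp add: det_diagonal diag_mat_def)

lemma invertible_diag_mat: "(\<And>k. d $ k \<noteq> 0) \<Longrightarrow> invertible (diag_mat d)"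
  by (simp add: invertible_det_nz det_diag_mat)

lemma invertible_right_factor:
  fixes A B :: "real ^ 'n ^ 'n"
  shows "invertible (A ** B) \<Longrightarrow> invertible B"
  by (simp add: invertible_det_nz det_mul)

lemma eigenvector_columns_mul:
  assumes "\<And>k. A *v column k V = lam k *\<^sub>R column k V"
  shows "A ** V = V ** diag_mat (\<chi> k. lam k)"
proof -
  have "(A ** V) $ i $ k = (A *v column k V) $ i" for i k
    by (simp add: matrix_matrix_mult_def matrix_vector_mult_def column_def)
  also have "\<dots> i k = lam k * V $ i $ k" for i k
    by (simp add: assms) (simp add: column_def)
  finally show ?thesis
    by (simp add: vec_eq_iff matrix_mul_diag_mat_nth)
qed

lemma row_normalize_diag_mat_mul:
  assumes "\<And>i. d $ i > 0"
  shows "row_normalize (diag_mat d ** A) = row_normalize A"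
proof -
  have "d $ i \<noteq> 0" "\<bar>d $ i\<bar> = d $ i" for i
    using assms[of i] by auto
  then show ?thesis
    by (simp add: vec_eq_iff row_normalize_def diag_mat_mul_row)
qed

lemma row_normalize_membership_mat_mul:
  "row_normalize (membership_mat g ** B) $ i = row_normalize B $ g i"
  by (simp add: row_normalize_def membership_mat_mul_row)

lemma invertible_rows_independent:
  fixes A :: "real ^ 'n ^ 'n"
  assumes "invertible A" and "(\<Sum>k\<in>UNIV. c k *\<^sub>R A $ k) = 0"
  shows "c i = 0"
  using assms matrix_right_invertible_independent_rows[of A]
  by (simp add: invertible_right_inverse row_def scalar_mult_eq_scaleR)

lemma invertible_row_nonzero:
  fixes A :: "real ^ 'n ^ 'n"
  assumes "invertible A"
  shows "A $ i \<noteq> 0"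
proof
  assume "A $ i = 0"
  then have "(\<Sum>k\<in>UNIV. (if k = i then 1 else 0) *\<^sub>R A $ k) = 0"
    by (simp add: if_distrib[of "\<lambda>x. x *\<^sub>R _"] cong: if_cong)
  with invertible_rows_independent[OF assms, of _ i] show False
    by force
qed

lemma inj_row_normalize_invertible:
  fixes A :: "real ^ 'n ^ 'n"
  assumes "invertible A"
  shows "inj (\<lambda>i. row_normalize A $ i)"
proof (rule injI, rule ccontr)
  fix i j
  assume eq: "row_normalize A $ i = row_normalize A $ j" and "i \<noteq> j"
  define c where "c k = (if k = i then 1 / norm (A $ i) else 0)
                      - (if k = j then 1 / norm (A $ j) else 0)" for k
  have "(\<Sum>k\<in>UNIV. c k *\<^sub>R A $ k) = row_normalize A $ i - row_normalize A $ j"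
    by (simp add: c_def scaleR_left_diff_distrib sum_subtractf row_normalize_def
        if_distrib[of "\<lambda>x. x *\<^sub>R _"] cong: if_cong)
  then have "c i = 0"
    using invertible_rows_independent[OF assms] eq by simp
  with \<open>i \<noteq> j\<close> invertible_row_nonzero[OF assms, of i] show False
    by (simp add: c_def)
qed

theorem lemma2:
  fixes g :: "'n::finite \<Rightarrow> 'k::{finite, linorder}"
    and P :: "((real, 'k) vec, 'k) vec"
    and \<theta> :: "(real, 'n) vec"
    and lam :: "'k \<Rightarrow> real"
    and V :: "((real, 'k) vec, 'n) vec"
  assumes communities_nonempty: "surj g"
    and P_sym: "transpose P = P"
    and P_nonneg: "\<forall>a b. P $ a $ b \<ge> 0"
    and P_nonsing: "invertible P"
    and P_irred: "irreducible_mat P"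
    and theta_pos: "\<forall>i. \<theta> $ i > 0"
    and rank_Omega: "rank (diag_mat \<theta> ** membership_mat g ** P ** transpose (membership_mat g) ** diag_mat \<theta>) = CARD('k)"
    and lam_nonzero: "\<forall>k. lam k \<noteq> 0"
    and lam_order: "\<forall>k l. k < l \<longrightarrow> \<bar>lam l\<bar> \<le> \<bar>lam k\<bar>"
    and V_orthonormal: "transpose V ** V = mat 1"
    and V_eigen: "\<forall>k. (diag_mat \<theta> ** membership_mat g ** P ** transpose (membership_mat g) ** diag_mat \<theta>) *v column k V = lam k *\<^sub>R column k V"
  shows "card (range (\<lambda>i. row_normalize (V ** diag_mat (\<chi> k. lam k)) $ i)) = CARD('k)
       \<and> (\<forall>i j. i \<noteq> j \<and> g i = g j \<longrightarrow>
            row_normalize (V ** diag_mat (\<chi> k. lam k)) $ i = row_normalize (V ** diag_mat (\<chi> k. lam k)) $ j)"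
proof -
  let ?\<Theta> = "diag_mat \<theta>" and ?Z = "membership_mat g" and ?\<Lambda> = "diag_mat (\<chi> k. lam k)"
  define B where "B = P ** transpose ?Z ** ?\<Theta> ** V"
  have X_eq: "V ** ?\<Lambda> = ?\<Theta> ** (?Z ** B)"
    using eigenvector_columns_mul V_eigen by (metis B_def matrix_mul_assoc)
  have rows: "row_normalize (V ** ?\<Lambda>) $ i = row_normalize B $ g i" for i
    using theta_pos
    by (simp add: X_eq row_normalize_diag_mat_mul row_normalize_membership_mat_mul)
  have "(transpose V ** ?\<Theta> ** ?Z) ** B = ?\<Lambda>"
    using V_orthonormal X_eq by (metis matrix_mul_assoc matrix_mul_lid)
  then have "invertible B"
    using invertible_right_factor invertible_diag_mat lam_nonzero by (metis vec_lambda_beta)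
  moreover have "range (\<lambda>i. row_normalize (V ** ?\<Lambda>) $ i) = range (\<lambda>a. row_normalize B $ a)"
    using communities_nonempty by (simp add: rows image_image[symmetric])
  ultimately show ?thesis
    by (simp add: rows card_image inj_row_normalize_invertible)
qed

end
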